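(* Let $A$ be a vector bundle over $M$, $P\in\Gamma(A^\vee\otimes A)$ any $(1,1)$-form, and $X$ a vector field of degree $b-1$ on $A[1]$. Then the map $\Phi(X):\Gamma(A)^{\times b}\to\Gamma(A)$, $\Phi(X)(E_1,\dots,E_b)=\sum_{k=0}^b\sum_{1\le i_1<\dots<i_k\le b}(-1)^{b-k}P^{b-k}B_X(E_1,\dots,PE_{i_1},\dots,PE_{i_k},\dots,E_b)$ ($P$ applied exactly in positions $i_1,\dots,i_k$) is alternating and $C^\infty(M)$-multilinear, i.e. $\Phi(X)\in\Gamma(\wedge^bA^\vee\otimes A)$.
   Context: $A[1]$ is the graded manifold with function algebra $\Gamma(\wedge^\bullet A^\vee)$; a vector field of degree $d$ on $A[1]$ is a graded derivation of degree $d$ of $\Gamma(\wedge^\bullet A^\vee)$. For $X$ of degree $b-1$, $a_X:C^\infty(M)\to\Gamma(\wedge^{b-1}A^\vee)$ and $\partial_X:\Gamma(A^\vee)\to\Gamma(\wedge^bA^\vee)$ are the restrictions of $X$. With $\langle\eta,X_1\wedge\cdots\wedge X_p\rangle=\eta(X_1,\dots,X_p)$, $B_X:\Gamma(A)^{\times b}\to\Gamma(A)$ is defined by $\langle W,B_X(E_1,\dots,E_b)\rangle=(-1)^{b-1}\big(\langle\partial_XW,E_1\wedge\cdots\wedge E_b\rangle-\sum_{i=1}^b(-1)^{b-i}\langle a_X\langle W,E_i\rangle,E_1\wedge\cdots\wedge\widehat{E_i}\wedge\cdots\wedge E_b\rangle\big)$ for all $W\in\Gamma(A^\vee)$. $P$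 is viewed as a $C^\infty(M)$-linear endomorphism of $\Gamma(A)$. *)

theory Defs
  imports Complex_Main
begin

(* Algebraic (Serre--Swan) model: the ring C^\<infinity>(M) is an arbitrary commutative
   real algebra 'r; \<Gamma>(A) is an 'r-module 'a (scalar multiplication sA). *)

definition multilinear_map ::
  "('r::comm_ring_1 \<Rightarrow> 'a::ab_group_add \<Rightarrow> 'a) \<Rightarrow> ('r \<Rightarrow> 'b::ab_group_add \<Rightarrow> 'b)
     \<Rightarrow> nat \<Rightarrow> ('a list \<Rightarrow> 'b) \<Rightarrow> bool" where
  "multilinear_map sA sB p f \<longleftrightarrow>
     (\<forall>xs k x y. length xs = p \<and> k < p \<longrightarrow>
        f (xs[k := x + y]) = f (xs[k := x]) + f (xs[k := y])) \<and>
     (\<forall>xs k r x. length xs = p \<and> k < p \<longrightarrow>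
        f (xs[k := sA r x]) = sB r (f (xs[k := x])))"

definition alternating_map :: "nat \<Rightarrow> ('a list \<Rightarrow> 'b::zero) \<Rightarrow> bool" where
  "alternating_map p f \<longleftrightarrow>
     (\<forall>xs i j. length xs = p \<and> i < j \<and> j < p \<and> xs ! i = xs ! j \<longrightarrow> f xs = 0)"

(* Sections of the p-th exterior power of the dual: alternating 'r-multilinear
  p-forms on \<Gamma>(A); represented as functions on lists, zero off length p. *)
definition alt_forms ::
  "('r::comm_ring_1 \<Rightarrow> 'a::ab_group_add \<Rightarrow> 'a) \<Rightarrow> nat \<Rightarrow> ('a list \<Rightarrow> 'r) set" where
  "alt_forms sA p = {\<omega>. (\<forall>xs. length xs \<noteq> p \<longrightarrow> \<omega> xs = 0) \<and>
       multilinear_map sA (*) p \<omega> \<and> alternating_map p \<omega>}"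

(* Sign of the (p,q)-shuffle whose first block occupies the positions S. *)
definition shuffle_sign :: "nat \<Rightarrow> nat set \<Rightarrow> 'r::comm_ring_1" where
  "shuffle_sign n S = (- 1) ^ card {(i, j). i \<in> S \<and> j \<in> {0..<n} - S \<and> j < i}"

definition wedge :: "nat \<Rightarrow> nat \<Rightarrow> ('a list \<Rightarrow> 'r::comm_ring_1) \<Rightarrow> ('a list \<Rightarrow> 'r)
                      \<Rightarrow> 'a list \<Rightarrow> 'r" where
  "wedge p q \<alpha> \<beta> = (\<lambda>xs. if length xs = p + q then
      (\<Sum>S\<in>{S. S \<subseteq> {0..<p+q} \<and> card S = p}.
         shuffle_sign (p+q) S * \<alpha> (nths xs S) * \<beta> (nths xs ({0..<p+q} - S)))
      else 0)"

(* Vector field of (integer) degree d on A[1]: a graded derivation of degree d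
  of \<Gamma>(\<wedge>^\<bullet> A^\<vee>), given by its homogeneous components D p :
  \<Gamma>(\<wedge>^p A^\<vee>) \<rightarrow> \<Gamma>(\<wedge>^p^+^d A^\<vee>) (zero when p + d < 0);
  real-linear, with the graded Leibniz rule. *)
definition vector_field ::
  "('r::{comm_ring_1,real_algebra_1} \<Rightarrow> 'a::ab_group_add \<Rightarrow> 'a) \<Rightarrow> int
     \<Rightarrow> (nat \<Rightarrow> ('a list \<Rightarrow> 'r) \<Rightarrow> ('a list \<Rightarrow> 'r)) \<Rightarrow> bool" where
  "vector_field sA d D \<longleftrightarrow>
     (\<forall>p \<omega>. \<omega> \<in> alt_forms sA p \<longrightarrow>
        (if int p + d \<ge> 0 then D p \<omega> \<in> alt_forms sA (nat (int p + d))
         else D p \<omega> = (\<lambda>_. 0))) \<and>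
     (\<forall>p \<alpha> \<beta>. \<alpha> \<in> alt_forms sA p \<and> \<beta> \<in> alt_forms sA p \<longrightarrow>
        D p (\<lambda>xs. \<alpha> xs + \<beta> xs) = (\<lambda>xs. D p \<alpha> xs + D p \<beta> xs)) \<and>
     (\<forall>p c \<alpha>. \<alpha> \<in> alt_forms sA p \<longrightarrow>
        D p (\<lambda>xs. c *\<^sub>R \<alpha> xs) = (\<lambda>xs. c *\<^sub>R D p \<alpha> xs)) \<and>
     (\<forall>p q \<alpha> \<beta>. \<alpha> \<in> alt_forms sA p \<and> \<beta> \<in> alt_forms sA q \<longrightarrow>
        D (p + q) (wedge p q \<alpha> \<beta>) =
          (\<lambda>xs. wedge (nat (int p + d)) q (D p \<alpha>) \<beta> xs
               + (- 1) ^ (nat \<bar>d\<bar> * p) * wedge p (nat (int q + d)) \<alpha> (D q \<beta>) xs))"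

(* \<Gamma>(A) is the module of sections of a vector bundle: finitely generated
  projective (dual basis lemma). *)
definition fg_projective ::
  "('r::comm_ring_1 \<Rightarrow> 'a::ab_group_add \<Rightarrow> 'a) \<Rightarrow> bool" where
  "fg_projective sA \<longleftrightarrow> (\<exists>(n::nat) (e::nat \<Rightarrow> 'a) (\<theta>::nat \<Rightarrow> 'a list \<Rightarrow> 'r).
      (\<forall>j<n. \<theta> j \<in> alt_forms sA 1) \<and> (\<forall>E. E = (\<Sum>j<n. sA (\<theta> j [E]) (e j))))"

(* Functions on C^\<infinity>(M) viewed as 0-forms. *)
definition const0 :: "'r::zero \<Rightarrow> 'a list \<Rightarrow> 'r" where
  "const0 f = (\<lambda>xs. if xs = [] then f else 0)"

(* B_X for X of degree b-1 (0-indexed positions; a_X f = D 0 (const0 f),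
  \<partial>_X W = D 1 W). *)
definition B_X ::
  "('r::{comm_ring_1,real_algebra_1} \<Rightarrow> 'a::ab_group_add \<Rightarrow> 'a)
     \<Rightarrow> (nat \<Rightarrow> ('a list \<Rightarrow> 'r) \<Rightarrow> ('a list \<Rightarrow> 'r)) \<Rightarrow> nat \<Rightarrow> 'a list \<Rightarrow> 'a" where
  "B_X sA D b Es = (THE B. \<forall>W \<in> alt_forms sA 1.
      W [B] = (- 1) ^ (b + 1) *
        (D 1 W Es - (\<Sum>i<b. (- 1) ^ (b - Suc i) *
             D 0 (const0 (W [Es ! i])) (take i Es @ drop (Suc i) Es))))"

definition Phi ::
  "('r::{comm_ring_1,real_algebra_1} \<Rightarrow> 'a::ab_group_add \<Rightarrow> 'a) \<Rightarrow> ('a \<Rightarrow> 'a)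
     \<Rightarrow> (nat \<Rightarrow> ('a list \<Rightarrow> 'r) \<Rightarrow> ('a list \<Rightarrow> 'r)) \<Rightarrow> nat \<Rightarrow> 'a list \<Rightarrow> 'a" where
  "Phi sA P D b Es = (\<Sum>I\<in>Pow {0..<b}.
      sA ((- 1) ^ (b - card I))
         ((P ^^ (b - card I)) (B_X sA D b (map (\<lambda>k. if k \<in> I then P (Es ! k) else Es ! k) [0..<b]))))"

end

(*
  Since Gamma(A) is finitely generated projective, a section is determined by its pairings with
  1-forms, and every C^\<infinity>(M)-linear functional on 1-forms is such a pairing. The right-hand side
  defining <W, B_X(E_1, ..., E_b)> is C^\<infinity>(M)-linear in W by the Leibniz rule, so B_X exists;
  it is additive and alternating in the E_i, and rescaling E_k by f changes it only by the
  anchor term (-1)^(k+1) a_X(f)(..., E_k omitted, ...) E_k (0-indexed k).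

  Pairing each index set I not containing k with I \<union> {k} writes Phi(X) as a signed sum of
  P^n (B_X(..., P E_k, ...) - P B_X(..., E_k, ...)); in this commutator the anchor terms cancel,
  so it is C^\<infinity>(M)-linear in E_k. If E_i = E_j, swapping i and j in I negates the summand for I,
  and the summands for swap-invariant I vanish since B_X is alternating.
*)

theory Submission
  imports Defs "HOL-Library.Disjoint_Sets" "HOL-Combinatorics.Transposition"
begin

abbreviation remove_nth :: "nat \<Rightarrow> 'x list \<Rightarrow> 'x list" where
  "remove_nth i xs \<equiv> take i xs @ drop (Suc i) xs"

lemma nth_remove_nth:
  "i < length xs \<Longrightarrow> m < length xs - 1 \<Longrightarrow>
    remove_nth i xs ! m = xs ! (if m < i then m else Suc m)"
  by (auto simp: nth_append min_def)

lemma remove_nth_update_other: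
  assumes "i \<noteq> k" "k < length xs" "i < length xs"
  shows "remove_nth i (xs[k := z]) = (remove_nth i xs)[(if k < i then k else k - 1) := z]"
proof (rule nth_equalityI)
  fix m assume "m < length (remove_nth i (xs[k := z]))"
  then show "remove_nth i (xs[k := z]) ! m = (remove_nth i xs)[(if k < i then k else k - 1) := z] ! m"
    using assms by (auto simp: nth_list_update nth_remove_nth)
qed (use assms in simp)

lemma remove_nth_split:
  assumes "p < q" "q < length xs"
  defines "ys \<equiv> take (q - p - 1) (drop (Suc p) xs)"
  shows "remove_nth p xs = take p xs @ ys @ xs ! q # drop (Suc q) xs"
    and "remove_nth q xs = take p xs @ xs ! p # ys @ drop (Suc q) xs"
proof -
  have "drop (Suc p) xs = ys @ drop (q - p - 1) (drop (Suc p) xs)"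
    unfolding ys_def by (rule append_take_drop_id[symmetric])
  also have "drop (q - p - 1) (drop (Suc p) xs) = xs ! q # drop (Suc q) xs"
    using assms by (simp add: Cons_nth_drop_Suc)
  finally show "remove_nth p xs = take p xs @ ys @ xs ! q # drop (Suc q) xs"
    by simp
  have "take q xs = take p xs @ take (q - p) (drop p xs)"
    using assms by (metis le_add_diff_inverse less_imp_le_nat take_add)
  also have "drop p xs = xs ! p # drop (Suc p) xs"
    using assms by (simp add: Cons_nth_drop_Suc)
  also have "take (q - p) (xs ! p # drop (Suc p) xs) = xs ! p # ys"
    using assms unfolding ys_def by (cases "q - p") auto
  finally show "remove_nth q xs = take p xs @ xs ! p # ys @ drop (Suc q) xs"
    by simp
qed

lemma nths_singleton_index: "i < length xs \<Longrightarrow> nths xs {i} = [xs ! i]"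
proof (induction xs arbitrary: i)
  case (Cons x xs)
  then show ?case
    by (cases i) (simp_all add: nths_Cons)
qed simp

lemma nths_remove_index:
  "i < length xs \<Longrightarrow> nths xs ({0..<length xs} - {i}) = remove_nth i xs"
proof (induction xs arbitrary: i)
  case (Cons x xs)
  show ?case
  proof (cases i)
    case 0
    have "{j. Suc j \<in> {0..<length (x # xs)} - {i}} = {0..<length xs}" using 0 by auto
    then show ?thesis using 0 by (simp add: nths_Cons nths_all)
  next
    case (Suc i')
    have "{j. Suc j \<in> {0..<length (x # xs)} - {i}} = {0..<length xs} - {i'}" using Suc by auto
    then show ?thesis using Suc Cons by (simp add: nths_Cons)
  qed
qed simp

section \<open>Slot-additive and alternating maps\<close>

definition additive_in_slots :: "nat \<Rightarrow> ('a::plus list \<Rightarrow> 'b::plus) \<Rightarrow> bool" where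
  "additive_in_slots n f \<longleftrightarrow>
     (\<forall>xs k x y. length xs = n \<and> k < n \<longrightarrow> f (xs[k := x + y]) = f (xs[k := x]) + f (xs[k := y]))"

lemma additive_in_slotsD:
  "additive_in_slots n f \<Longrightarrow> length xs = n \<Longrightarrow> k < n \<Longrightarrow>
    f (xs[k := x + y]) = f (xs[k := x]) + f (xs[k := y])"
  unfolding additive_in_slots_def by blast

lemma multilinear_map_iff:
  "multilinear_map sA sB n f \<longleftrightarrow> additive_in_slots n f \<and>
     (\<forall>xs k r x. length xs = n \<and> k < n \<longrightarrow> f (xs[k := sA r x]) = sB r (f (xs[k := x])))"
  unfolding multilinear_map_def additive_in_slots_def ..

lemma alternating_map_swap:
  fixes f :: "'a::plus list \<Rightarrow> 'b::ab_group_add"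
  assumes add: "additive_in_slots n f" and alt: "alternating_map n f"
    and len: "length xs = n" and ij: "i < j" "j < n"
  shows "f (xs[i := x, j := y]) = - f (xs[i := y, j := x])"
proof -
  define g where "g u v = f (xs[i := u, j := v])" for u v
  have g_add_left: "g (u + u') v = g u v + g u' v" for u u' v
  proof -
    have "xs[i := w, j := v] = xs[j := v, i := w]" for w
      using ij by (simp add: list_update_swap)
    then show ?thesis
      unfolding g_def using additive_in_slotsD[OF add, of "xs[j := v]" i u u'] len ij by simp
  qed
  have g_add_right: "g u (v + v') = g u v + g u v'" for u v v'
    unfolding g_def using additive_in_slotsD[OF add, of "xs[i := u]" j v v'] len ij by simp
  have g_diag: "g u u = 0" for u
  proof -
    have "xs[i := u, j := u] ! i = xs[i := u, j := u] ! j"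
      using len ij by (simp add: nth_list_update)
    then show ?thesis
      unfolding g_def using alt len ij unfolding alternating_map_def by (metis length_list_update)
  qed
  have "0 = g (x + y) (x + y)" by (simp add: g_diag)
  also have "\<dots> = g x x + g x y + (g y x + g y y)" by (simp add: g_add_left g_add_right)
  also have "\<dots> = g x y + g y x" by (simp add: g_diag)
  finally show ?thesis unfolding g_def by (simp add: eq_neg_iff_add_eq_0)
qed

lemma alternating_map_move:
  fixes f :: "'a::plus list \<Rightarrow> 'b::comm_ring_1"
  assumes add: "additive_in_slots n f" and alt: "alternating_map n f"
  shows "length (xs @ a # ys @ zs) = n \<Longrightarrow>
    f (xs @ a # ys @ zs) = (- 1) ^ length ys * f (xs @ ys @ a # zs)"
proof (induction ys arbitrary: xs)
  case (Cons y ys)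
  let ?L = "xs @ a # y # ys @ zs"
  have "f (?L[length xs := a, Suc (length xs) := y]) = - f (?L[length xs := y, Suc (length xs) := a])"
    by (rule alternating_map_swap[OF add alt]) (use Cons.prems in auto)
  then have "f ?L = - f ((xs @ [y]) @ a # ys @ zs)"
    by (simp add: list_update_append)
  also have "\<dots> = - ((- 1) ^ length ys * f ((xs @ [y]) @ ys @ a # zs))"
    using Cons.IH[of "xs @ [y]"] Cons.prems by simp
  finally show ?case by simp
qed simp

lemma alternating_map_remove_nth_eq_0:
  assumes alt: "alternating_map (n - 1) f" and len: "length xs = n"
    and pq: "p < q" "q < n" and eq: "xs ! p = xs ! q" and i: "i < n" "i \<noteq> p" "i \<noteq> q"
  shows "f (remove_nth i xs) = 0"
proof -
  let ?p' = "if p < i then p else p - 1" and ?q' = "if q < i then q else q - 1"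
  have "?p' < ?q'" "?q' < n - 1" using i pq by auto
  moreover have "remove_nth i xs ! ?p' = remove_nth i xs ! ?q'"
    using nth_remove_nth[of i xs ?p'] nth_remove_nth[of i xs ?q'] i pq len eq by auto
  moreover have "length (remove_nth i xs) = n - 1" using i len by simp
  ultimately show ?thesis
    using alt unfolding alternating_map_def by blast
qed

lemma alternating_map_remove_nth_swap:
  fixes f :: "'a::plus list \<Rightarrow> 'b::comm_ring_1"
  assumes add: "additive_in_slots (n - 1) f" and alt: "alternating_map (n - 1) f"
    and len: "length xs = n" and pq: "p < q" "q < n" and eq: "xs ! p = xs ! q"
  shows "f (remove_nth q xs) = (- 1) ^ (q - p - 1) * f (remove_nth p xs)"
proof -
  let ?ys = "take (q - p - 1) (drop (Suc p) xs)"
  have "length ?ys = q - p - 1" using pq len by simp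
  moreover have "f (take p xs @ xs ! p # ?ys @ drop (Suc q) xs) =
      (- 1) ^ length ?ys * f (take p xs @ ?ys @ xs ! p # drop (Suc q) xs)"
    by (rule alternating_map_move[OF add alt]) (use pq len in auto)
  ultimately show ?thesis
    using remove_nth_split[OF pq(1) pq(2)[folded len]] eq by simp
qed

lemma sum_anti_involution_eq_0:
  fixes f :: "'a \<Rightarrow> 'b::ab_group_add"
  assumes h: "\<And>x. x \<in> X \<Longrightarrow> h x \<in> X" "\<And>x. x \<in> X \<Longrightarrow> h (h x) = x"
    and anti: "\<And>x. x \<in> X \<Longrightarrow> f (h x) = - f x"
    and fixed: "\<And>x. x \<in> X \<Longrightarrow> h x = x \<Longrightarrow> f x = 0"
  shows "sum f X = 0"
proof (cases "finite X")
  case True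
  have "sum f X = sum f {x \<in> X. h x \<noteq> x}"
    by (rule sum.mono_neutral_right) (use True fixed in auto)
  also have "\<dots> = 0"
    by (rule sum_involution_eq_0) (use h anti in \<open>force+\<close>)
  finally show ?thesis .
qed simp

section \<open>Twisting a multi-additive map by an endomorphism\<close>

definition map_at :: "('a \<Rightarrow> 'a) \<Rightarrow> nat set \<Rightarrow> nat \<Rightarrow> 'a list \<Rightarrow> 'a list" where
  "map_at P I n xs = map (\<lambda>k. if k \<in> I then P (xs ! k) else xs ! k) [0..<n]"

lemma length_map_at [simp]: "length (map_at P I n xs) = n"
  unfolding map_at_def by simp

lemma map_at_update:
  "length xs = n \<Longrightarrow> k < n \<Longrightarrow>
    map_at P I n (xs[k := z]) = (map_at P I n xs)[k := (if k \<in> I then P z else z)]"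
  unfolding map_at_def by (rule nth_equalityI) (auto simp: nth_list_update)

lemma map_at_insert: "k < n \<Longrightarrow> map_at P (insert k I) n xs = (map_at P I n xs)[k := P (xs ! k)]"
  unfolding map_at_def by (rule nth_equalityI) (auto simp: nth_list_update)

lemma map_at_transpose:
  assumes "i < n" "j < n" "xs ! i = xs ! j"
  shows "map_at P (transpose i j ` I) n xs =
    (map_at P I n xs)[i := map_at P I n xs ! j, j := map_at P I n xs ! i]"
  unfolding map_at_def
  by (rule nth_equalityI) (use assms in \<open>auto simp: nth_list_update in_transpose_image_iff transpose_def\<close>)

definition twist ::
  "('r::comm_ring_1 \<Rightarrow> 'a::ab_group_add \<Rightarrow> 'a) \<Rightarrow> ('a \<Rightarrow> 'a) \<Rightarrow> nat \<Rightarrow> ('a list \<Rightarrow> 'a)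
     \<Rightarrow> 'a list \<Rightarrow> 'a" where
  "twist sA P n B xs = (\<Sum>I\<in>Pow {0..<n}.
      sA ((- 1) ^ (n - card I)) ((P ^^ (n - card I)) (B (map_at P I n xs))))"

lemma Phi_eq_twist: "Phi sA P D b = twist sA P b (B_X sA D b)"
  by (simp add: fun_eq_iff Phi_def twist_def map_at_def)

lemma module_hom_funpow: "module_hom s s f \<Longrightarrow> module_hom s s (f ^^ n)"
proof (induction n)
  case 0
  then show ?case by (simp add: module_hom_iff module.module_hom_id)
next
  case (Suc n)
  then show ?case
    unfolding funpow_Suc_right by (intro module_hom_compose)
qed

(* The summands for I and insert k I, with k \<notin> I, combine into one term. *)
lemma twist_update:
  assumes P: "module_hom sA sA P" and len: "length xs = n" and k: "k < n"
  shows "twist sA P n B (xs[k := z]) =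
    (\<Sum>I\<in>Pow ({0..<n} - {k}). sA ((- 1) ^ (n - Suc (card I)))
       ((P ^^ (n - Suc (card I))) (B ((map_at P I n xs)[k := P z]) - P (B ((map_at P I n xs)[k := z])))))"
proof -
  interpret module_hom sA sA P by (fact P)
  define A where "A = {0..<n} - {k}"
  define summand where "summand I =
    sA ((- 1) ^ (n - card I)) ((P ^^ (n - card I)) (B (map_at P I n (xs[k := z]))))" for I
  have kA: "k \<notin> A" and finA: "finite A" and cardA: "card A = n - 1"
    using k unfolding A_def by auto
  have "twist sA P n B (xs[k := z]) = sum summand (Pow (insert k A))"
    unfolding twist_def summand_def A_def using k by (simp add: insert_absorb)
  also have "\<dots> = sum summand (Pow A) + sum summand (insert k ` Pow A)"
    unfolding Pow_insert by (rule sum.union_disjoint) (use finA kA in auto)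
  also have "sum summand (insert k ` Pow A) = (\<Sum>I\<in>Pow A. summand (insert k I))"
    by (rule sum.reindex_cong[where l = "insert k"]) (use kA in \<open>auto intro!: inj_onI simp: insert_ident\<close>)
  also have "sum summand (Pow A) + \<dots> = (\<Sum>I\<in>Pow A. summand I + summand (insert k I))"
    by (simp add: sum.distrib)
  also have "\<dots> = (\<Sum>I\<in>Pow A. sA ((- 1) ^ (n - Suc (card I)))
       ((P ^^ (n - Suc (card I))) (B ((map_at P I n xs)[k := P z]) - P (B ((map_at P I n xs)[k := z])))))"
  proof (rule sum.cong)
    fix I assume "I \<in> Pow A"
    then have kI: "k \<notin> I" and finI: "finite I" and "card I \<le> n - 1"
      using kA finA cardA card_mono[OF finA] by (auto intro: finite_subset)
    then have n_card: "n - card I = Suc (n - Suc (card I))" "n - card (insert k I) = n - Suc (card I)"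
      using k by auto
    define m where "m = n - Suc (card I)"
    let ?L = "map_at P I n xs"
    have Pm: "module_hom sA sA (P ^^ m)" by (rule module_hom_funpow[OF P])
    have "summand I = sA ((- 1) ^ m) (- (P ^^ m) (P (B (?L[k := z]))))"
      unfolding summand_def n_card m_def[symmetric] map_at_update[OF len k]
      by (simp add: kI funpow_swap1 module_hom.neg[OF Pm])
    moreover have "summand (insert k I) = sA ((- 1) ^ m) ((P ^^ m) (B (?L[k := P z])))"
      unfolding summand_def n_card m_def[symmetric] map_at_insert[OF k] map_at_update[OF len k]
      by simp
    ultimately show "summand I + summand (insert k I) =
      sA ((- 1) ^ m) ((P ^^ m) (B (?L[k := P z]) - P (B (?L[k := z]))))"
      by (simp add: module_hom.diff[OF Pm] m1.scale_right_diff_distrib)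
  qed simp
  finally show ?thesis unfolding A_def .
qed

lemma twist_multilinear:
  assumes P: "module_hom sA sA P" and B_add: "additive_in_slots n B"
    and anchor: "\<And>xs k r x. length xs = n \<Longrightarrow> k < n \<Longrightarrow>
      B (xs[k := sA r x]) = sA r (B (xs[k := x])) + sA (c k r (remove_nth k xs)) x"
  shows "multilinear_map sA sA n (twist sA P n B)"
proof -
  interpret module_hom sA sA P by (fact P)
  define comm where "comm L k z = B (L[k := P z]) - P (B (L[k := z]))" for L k z
  have comm_add: "comm L k (x + y) = comm L k x + comm L k y"
    if "length L = n" "k < n" for L k x y
    unfolding comm_def using additive_in_slotsD[OF B_add that] by (simp add: add)
  \<comment> \<open>both sides of the commutator produce the same anchor term \<open>sA c (P x)\<close>\<close>
  have comm_scale: "comm L k (sA r x) = sA r (comm L k x)"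
    if "length L = n" "k < n" for L k r x
    unfolding comm_def scale anchor[OF that]
    by (simp add: add scale m1.scale_right_diff_distrib)
  have "twist sA P n B (xs[k := x + y]) = twist sA P n B (xs[k := x]) + twist sA P n B (xs[k := y])"
    if "length xs = n" "k < n" for xs k x y
    unfolding twist_update[OF P that] comm_def[symmetric] sum.distrib[symmetric]
    by (rule sum.cong)
      (simp_all add: comm_add that module_hom.add[OF module_hom_funpow[OF P]] m1.scale_right_distrib)
  moreover have "twist sA P n B (xs[k := sA r x]) = sA r (twist sA P n B (xs[k := x]))"
    if "length xs = n" "k < n" for xs k r x
    unfolding twist_update[OF P that] comm_def[symmetric] m1.scale_sum_right
    by (rule sum.cong)
      (simp_all add: comm_scale that module_hom.scale[OF module_hom_funpow[OF P]] mult.commute)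
  ultimately show ?thesis
    unfolding multilinear_map_iff additive_in_slots_def by blast
qed

lemma twist_alternating:
  fixes sA :: "'r::comm_ring_1 \<Rightarrow> 'a::ab_group_add \<Rightarrow> 'a"
  assumes P: "module_hom sA sA P" and B_add: "additive_in_slots n B" and alt: "alternating_map n B"
  shows "alternating_map n (twist sA P n B)"
  unfolding alternating_map_def
proof (intro allI impI, elim conjE)
  fix xs :: "'a list" and i j
  assume len: "length xs = n" and ij: "i < j" "j < n" and eq: "xs ! i = xs ! j"
  interpret module_hom sA sA P by (fact P)
  define summand where "summand I =
    sA ((- 1) ^ (n - card I)) ((P ^^ (n - card I)) (B (map_at P I n xs)))" for I
  show "twist sA P n B xs = 0"
    unfolding twist_def summand_def[symmetric]
  proof (rule sum_anti_involution_eq_0[where h = "image (transpose i j)"])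
    fix I assume I: "I \<in> Pow {0..<n}"
    then show "transpose i j ` I \<in> Pow {0..<n}"
      using ij by (auto simp: transpose_def)
    show "transpose i j ` transpose i j ` I = I"
      by (simp add: image_image)
    let ?L = "map_at P I n xs"
    have "B (map_at P (transpose i j ` I) n xs) = - B (?L[i := ?L ! i, j := ?L ! j])"
      unfolding map_at_transpose[OF less_trans[OF ij] ij(2) eq]
      by (rule alternating_map_swap[OF B_add alt]) (use ij in auto)
    then show "summand (transpose i j ` I) = - summand I"
      unfolding summand_def
      by (simp add: card_image module_hom.neg[OF module_hom_funpow[OF P]])
    assume "transpose i j ` I = I"
    then have "?L ! i = ?L ! j"
      using ij eq unfolding map_at_def by (auto simp: in_transpose_image_iff)
    then have "B ?L = 0"
      using alt ij unfolding alternating_map_def by (metis length_map_at)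
    then show "summand I = 0"
      unfolding summand_def by (simp add: module_hom.zero[OF module_hom_funpow[OF P]])
  qed
qed

section \<open>Forms, wedge products and the dual basis\<close>

lemma alt_forms_zero_off: "\<omega> \<in> alt_forms sA p \<Longrightarrow> length xs \<noteq> p \<Longrightarrow> \<omega> xs = 0"
  unfolding alt_forms_def by auto

lemma alt_forms_additive_in_slots: "\<omega> \<in> alt_forms sA p \<Longrightarrow> additive_in_slots p \<omega>"
  unfolding alt_forms_def multilinear_map_iff by auto

lemma alt_forms_scale_slot:
  "\<omega> \<in> alt_forms sA p \<Longrightarrow> length xs = p \<Longrightarrow> k < p \<Longrightarrow>
    \<omega> (xs[k := sA r x]) = r * \<omega> (xs[k := x])"
  unfolding alt_forms_def multilinear_map_def by auto

lemma alt_forms_alternating: "\<omega> \<in> alt_forms sA p \<Longrightarrow> alternating_map p \<omega>"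
  unfolding alt_forms_def by auto

lemma alt_form1_add: "W \<in> alt_forms sA 1 \<Longrightarrow> W [x + y] = W [x] + W [y]"
  using additive_in_slotsD[OF alt_forms_additive_in_slots, of W sA 1 "[x]" 0 x y] by simp

lemma alt_form1_scale: "W \<in> alt_forms sA 1 \<Longrightarrow> W [sA r x] = r * W [x]"
  using alt_forms_scale_slot[of W sA 1 "[x]" 0 r x] by simp

lemma alt_form1_zero: "W \<in> alt_forms sA 1 \<Longrightarrow> W [0] = 0"
  using alt_form1_add[of W sA 0 0] by simp

lemma alt_form1_sum: "W \<in> alt_forms sA 1 \<Longrightarrow> W [sum g A] = (\<Sum>a\<in>A. W [g a])"
  by (induction A rule: infinite_finite_induct) (simp_all add: alt_form1_zero alt_form1_add)

lemma const0_in_alt_forms: "const0 f \<in> alt_forms sA 0"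
  unfolding alt_forms_def multilinear_map_def alternating_map_def const0_def by auto

lemma zero_in_alt_forms: "(\<lambda>_. 0) \<in> alt_forms sA p"
  unfolding alt_forms_def multilinear_map_def alternating_map_def by auto

lemma mult_in_alt_forms: "W \<in> alt_forms sA p \<Longrightarrow> (\<lambda>xs. f * W xs) \<in> alt_forms sA p"
  unfolding alt_forms_def multilinear_map_def alternating_map_def by (auto simp: algebra_simps)

lemma add_in_alt_forms:
  "V \<in> alt_forms sA p \<Longrightarrow> W \<in> alt_forms sA p \<Longrightarrow> (\<lambda>xs. V xs + W xs) \<in> alt_forms sA p"
  unfolding alt_forms_def multilinear_map_def alternating_map_def by (auto simp: algebra_simps)

lemma const0_add: "const0 (f + (g::'r::monoid_add)) = (\<lambda>xs. const0 f xs + const0 g xs)"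
  unfolding const0_def by (simp add: fun_eq_iff)

lemma wedge_const0_left:
  assumes "length xs = q"
  shows "wedge 0 q (const0 f) \<beta> xs = f * \<beta> xs"
proof -
  have "{S. S \<subseteq> {0..<q} \<and> card S = 0} = {{}}"
    by (auto dest: finite_subset)
  then show ?thesis
    using assms by (simp add: wedge_def shuffle_sign_def const0_def nths_all)
qed

lemma wedge_const0_right:
  assumes "length xs = p"
  shows "wedge p 0 \<alpha> (const0 g) xs = \<alpha> xs * g"
proof -
  have "{S. S \<subseteq> {0..<p} \<and> card S = p} = {{0..<p}}"
    using card_subset_eq[of "{0..<p}"] by auto
  then show ?thesis
    using assms by (simp add: wedge_def shuffle_sign_def const0_def nths_all)
qed

lemma wedge_const0_const0: "wedge 0 0 (const0 f) (const0 g) = const0 (f * g)"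
proof
  fix xs :: "'a list"
  show "wedge 0 0 (const0 f) (const0 g) xs = const0 (f * g) xs"
    using wedge_const0_left[of xs 0 f "const0 g"] by (cases "xs = []") (simp_all add: wedge_def const0_def)
qed

lemma wedge_const0_alt_form1:
  assumes "W \<in> alt_forms sA 1"
  shows "wedge 0 1 (const0 f) W = (\<lambda>xs. f * W xs)"
proof
  fix xs :: "'a list"
  show "wedge 0 1 (const0 f) W xs = f * W xs"
    using wedge_const0_left[of xs 1 f W] alt_forms_zero_off[OF assms, of xs]
    by (cases "length xs = 1") (simp_all add: wedge_def)
qed

lemma wedge_one_right_expand:
  fixes \<alpha> \<beta> :: "'a list \<Rightarrow> 'r::comm_ring_1"
  assumes len: "length xs = n"
  shows "wedge (n - 1) 1 \<alpha> \<beta> xs =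
    (\<Sum>i<n. (- 1) ^ (n - Suc i) * \<alpha> (remove_nth i xs) * \<beta> [xs ! i])"
proof (cases "n = 0")
  case True
  then show ?thesis using len by (simp add: wedge_def)
next
  case False
  have shuffles: "{S. S \<subseteq> {0..<n} \<and> card S = n - 1} = (\<lambda>i. {0..<n} - {i}) ` {..<n}"
  proof (intro set_eqI iffI)
    fix S assume "S \<in> {S. S \<subseteq> {0..<n} \<and> card S = n - 1}"
    then have S: "S \<subseteq> {0..<n}" "card S = n - 1" by auto
    then have "S \<noteq> {0..<n}" using False by auto
    then obtain i where "i \<in> {0..<n} - S" using S(1) by blast
    then have i: "i < n" "i \<notin> S" by auto
    then have "S = {0..<n} - {i}"
      using S card_subset_eq[of "{0..<n} - {i}" S] by auto
    then show "S \<in> (\<lambda>i. {0..<n} - {i}) ` {..<n}" using i by auto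
  qed auto
  have inj: "inj_on (\<lambda>i. {0..<n} - {i}) {..<n}"
  proof (rule inj_onI)
    fix i j assume "i \<in> {..<n}" and eq: "{0..<n} - {i} = {0..<n} - {j}"
    have "i \<notin> {0..<n} - {j}" unfolding eq[symmetric] by simp
    then show "i = j" using \<open>i \<in> {..<n}\<close> by auto
  qed
  have sign: "shuffle_sign n ({0..<n} - {i}) = ((- 1) ^ (n - Suc i) :: 'r)" if "i < n" for i
  proof -
    have "{(i', j). i' \<in> {0..<n} - {i} \<and> j \<in> {0..<n} - ({0..<n} - {i}) \<and> j < i'}
        = (\<lambda>i'. (i', i)) ` {Suc i..<n}"
      using that by auto
    moreover have "card ((\<lambda>i'. (i', i)) ` {Suc i..<n}) = n - Suc i"
      by (subst card_image) (auto intro: inj_onI)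
    ultimately show ?thesis unfolding shuffle_sign_def by simp
  qed
  have compl: "{0..<n} - ({0..<n} - {i}) = {i}" if "i < n" for i
    using that by auto
  have "wedge (n - 1) 1 \<alpha> \<beta> xs = (\<Sum>S\<in>{S. S \<subseteq> {0..<n} \<and> card S = n - 1}.
      shuffle_sign n S * \<alpha> (nths xs S) * \<beta> (nths xs ({0..<n} - S)))"
    unfolding wedge_def using len False by simp
  also have "\<dots> = (\<Sum>i<n. shuffle_sign n ({0..<n} - {i}) * \<alpha> (nths xs ({0..<n} - {i}))
      * \<beta> (nths xs ({0..<n} - ({0..<n} - {i}))))"
    unfolding shuffles sum.reindex[OF inj] comp_def ..
  also have "\<dots> = (\<Sum>i<n. (- 1) ^ (n - Suc i) * \<alpha> (remove_nth i xs) * \<beta> [xs ! i])"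
    using len nths_remove_index[of _ xs, unfolded len]
    by (intro sum.cong) (simp_all add: sign compl nths_singleton_index)
  finally show ?thesis .
qed

lemma fg_projective_ext:
  assumes "fg_projective sA" and "\<And>W. W \<in> alt_forms sA 1 \<Longrightarrow> W [x] = W [y]"
  shows "x = y"
proof -
  obtain n e \<theta> where \<theta>: "\<forall>j<(n::nat). \<theta> j \<in> alt_forms sA 1"
    and dual: "\<forall>E. E = (\<Sum>j<n. sA (\<theta> j [E]) (e j))"
    using assms(1) unfolding fg_projective_def by blast
  have "\<theta> j [x] = \<theta> j [y]" if "j < n" for j
    using \<theta> assms(2) that by blast
  moreover have "x = (\<Sum>j<n. sA (\<theta> j [x]) (e j))" using dual by blast
  ultimately have "x = (\<Sum>j<n. sA (\<theta> j [y]) (e j))" by simp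
  also have "\<dots> = y" using dual[rule_format, of y] by (rule sym)
  finally show ?thesis .
qed

lemma fg_projective_represent:
  fixes sA :: "'r::comm_ring_1 \<Rightarrow> 'a::ab_group_add \<Rightarrow> 'a"
  assumes "fg_projective sA"
    and add: "\<And>V W. V \<in> alt_forms sA 1 \<Longrightarrow> W \<in> alt_forms sA 1 \<Longrightarrow>
      R (\<lambda>xs. V xs + W xs) = R V + R W"
    and mult: "\<And>f W. W \<in> alt_forms sA 1 \<Longrightarrow> R (\<lambda>xs. f * W xs) = f * R W"
  shows "\<exists>x. \<forall>W\<in>alt_forms sA 1. W [x] = R W"
proof -
  obtain n e \<theta> where \<theta>: "\<forall>j<(n::nat). \<theta> j \<in> alt_forms sA 1"
    and dual: "\<forall>E. E = (\<Sum>j<n. sA (\<theta> j [E]) (e j))"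
    using assms(1) unfolding fg_projective_def by blast
  have comb: "(\<lambda>xs. \<Sum>j<m. c j * \<theta> j xs) \<in> alt_forms sA 1 \<and>
      R (\<lambda>xs. \<Sum>j<m. c j * \<theta> j xs) = (\<Sum>j<m. c j * R (\<theta> j))" if "m \<le> n" for m c
    using that
  proof (induction m)
    case 0
    show ?case
      using mult[OF zero_in_alt_forms, of 0] by (simp add: zero_in_alt_forms)
  next
    case (Suc m)
    then have "(\<lambda>xs. c m * \<theta> m xs) \<in> alt_forms sA 1"
      using \<theta> by (simp add: mult_in_alt_forms)
    then show ?case
      using Suc add[of "\<lambda>xs. \<Sum>j<m. c j * \<theta> j xs" "\<lambda>xs. c m * \<theta> m xs"] mult \<theta>
      by (simp add: add_in_alt_forms)
  qed
  have expand: "W = (\<lambda>xs. \<Sum>j<n. W [e j] * \<theta> j xs)" if W: "W \<in> alt_forms sA 1" for W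
  proof
    fix xs :: "'a list"
    show "W xs = (\<Sum>j<n. W [e j] * \<theta> j xs)"
    proof (cases "length xs = 1")
      case True
      then obtain E where xs: "xs = [E]" by (cases xs) auto
      have "W [E] = W [(\<Sum>j<n. sA (\<theta> j [E]) (e j))]" using dual[rule_format, of E] by (rule arg_cong)
      then show ?thesis
        using W xs by (simp add: alt_form1_sum alt_form1_scale mult.commute)
    next
      case False
      have "\<theta> j xs = 0" if "j < n" for j
        using \<theta> that False alt_forms_zero_off by blast
      then have "(\<Sum>j<n. W [e j] * \<theta> j xs) = 0" by simp
      then show ?thesis
        using W False by (simp add: alt_forms_zero_off)
    qed
  qed
  show ?thesis
  proof (intro exI ballI)
    fix W assume W: "W \<in> alt_forms sA 1"
    have "W [(\<Sum>j<n. sA (R (\<theta> j)) (e j))] = (\<Sum>j<n. W [e j] * R (\<theta> j))"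
      using W by (simp add: alt_form1_sum alt_form1_scale mult.commute)
    also have "\<dots> = R W"
      using comb[of n "\<lambda>j. W [e j]"] expand[OF W] by simp
    finally show "W [(\<Sum>j<n. sA (R (\<theta> j)) (e j))] = R W" .
  qed
qed

section \<open>The bracket \<open>B_X\<close> of a vector field\<close>

definition B_X_pairing ::
  "(nat \<Rightarrow> ('a list \<Rightarrow> 'r) \<Rightarrow> ('a list \<Rightarrow> 'r)) \<Rightarrow> nat \<Rightarrow> ('a list \<Rightarrow> 'r::comm_ring_1)
     \<Rightarrow> 'a list \<Rightarrow> 'r" where
  "B_X_pairing D b W Es = (- 1) ^ (b + 1) *
     (D 1 W Es - (\<Sum>i<b. (- 1) ^ (b - Suc i) * D 0 (const0 (W [Es ! i])) (remove_nth i Es)))"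

lemma B_X_eq_The: "B_X sA D b Es = (THE B. \<forall>W\<in>alt_forms sA 1. W [B] = B_X_pairing D b W Es)"
  by (simp add: B_X_def B_X_pairing_def)

locale vector_field_deg =
  fixes sA :: "'r::{comm_ring_1,real_algebra_1} \<Rightarrow> 'a::ab_group_add \<Rightarrow> 'a"
    and D :: "nat \<Rightarrow> ('a list \<Rightarrow> 'r) \<Rightarrow> ('a list \<Rightarrow> 'r)"
    and b :: nat
  assumes vector_field: "vector_field sA (int b - 1) D"
begin

lemma D_in_alt_forms:
  assumes "\<omega> \<in> alt_forms sA p" "p + b \<ge> 1"
  shows "D p \<omega> \<in> alt_forms sA (p + b - 1)"
proof -
  have "if int p + (int b - 1) \<ge> 0 then D p \<omega> \<in> alt_forms sA (nat (int p + (int b - 1)))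
        else D p \<omega> = (\<lambda>_. 0)"
    using vector_field assms(1) unfolding vector_field_def by blast
  moreover have "int p + (int b - 1) \<ge> 0" "nat (int p + (int b - 1)) = p + b - 1"
    using assms(2) by auto
  ultimately show ?thesis by simp
qed

lemma D1_in_alt_forms: "W \<in> alt_forms sA 1 \<Longrightarrow> D 1 W \<in> alt_forms sA b"
  using D_in_alt_forms[of W 1] by simp

lemma D0_const0_in_alt_forms: "0 < b \<Longrightarrow> D 0 (const0 c) \<in> alt_forms sA (b - 1)"
  using D_in_alt_forms[OF const0_in_alt_forms[of c]] by simp

lemma D_add:
  "\<alpha> \<in> alt_forms sA p \<Longrightarrow> \<beta> \<in> alt_forms sA p \<Longrightarrow>
    D p (\<lambda>xs. \<alpha> xs + \<beta> xs) = (\<lambda>xs. D p \<alpha> xs + D p \<beta> xs)"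
  using vector_field unfolding vector_field_def by blast

lemma D_const0_wedge:
  assumes "\<beta> \<in> alt_forms sA q"
  shows "D q (wedge 0 q (const0 f) \<beta>) =
    (\<lambda>xs. wedge (b - 1) q (D 0 (const0 f)) \<beta> xs + wedge 0 (q + b - 1) (const0 f) (D q \<beta>) xs)"
proof -
  have "D (0 + q) (wedge 0 q (const0 f) \<beta>) =
      (\<lambda>xs. wedge (nat (int 0 + (int b - 1))) q (D 0 (const0 f)) \<beta> xs
        + (- 1) ^ (nat \<bar>int b - 1\<bar> * 0) * wedge 0 (nat (int q + (int b - 1))) (const0 f) (D q \<beta>) xs)"
    using vector_field const0_in_alt_forms assms unfolding vector_field_def by blast
  moreover have "nat (int 0 + (int b - 1)) = b - 1" "nat (int q + (int b - 1)) = q + b - 1"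
    by auto
  ultimately show ?thesis by simp
qed

lemma D1_mult:
  assumes W: "W \<in> alt_forms sA 1" and len: "length Es = b"
  shows "D 1 (\<lambda>xs. f * W xs) Es = f * D 1 W Es
    + (\<Sum>i<b. (- 1) ^ (b - Suc i) * D 0 (const0 f) (remove_nth i Es) * W [Es ! i])"
proof -
  have "D 1 (\<lambda>xs. f * W xs) Es =
      wedge (b - 1) 1 (D 0 (const0 f)) W Es + wedge 0 b (const0 f) (D 1 W) Es"
    using fun_cong[OF D_const0_wedge[OF W, of f], of Es] unfolding wedge_const0_alt_form1[OF W] by simp
  also have "\<dots> = (\<Sum>i<b. (- 1) ^ (b - Suc i) * D 0 (const0 f) (remove_nth i Es) * W [Es ! i])
      + f * D 1 W Es"
    unfolding wedge_one_right_expand[OF len] wedge_const0_left[OF len] ..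
  finally show ?thesis by (simp add: add.commute)
qed

lemma D0_const0_mult:
  assumes len: "length xs = b - 1"
  shows "D 0 (const0 (f * g)) xs = D 0 (const0 f) xs * g + f * D 0 (const0 g) xs"
proof -
  have "D 0 (const0 (f * g)) xs =
      wedge (b - 1) 0 (D 0 (const0 f)) (const0 g) xs + wedge 0 (b - 1) (const0 f) (D 0 (const0 g)) xs"
    using fun_cong[OF D_const0_wedge[OF const0_in_alt_forms[of g], of f], of xs]
    unfolding wedge_const0_const0 by simp
  also have "\<dots> = D 0 (const0 f) xs * g + f * D 0 (const0 g) xs"
    unfolding wedge_const0_right[OF len] wedge_const0_left[OF len] ..
  finally show ?thesis .
qed

lemma B_X_pairing_add:
  assumes V: "V \<in> alt_forms sA 1" and W: "W \<in> alt_forms sA 1"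
  shows "B_X_pairing D b (\<lambda>xs. V xs + W xs) Es = B_X_pairing D b V Es + B_X_pairing D b W Es"
proof -
  have "D 0 (const0 (V [Es ! i] + W [Es ! i])) =
      (\<lambda>xs. D 0 (const0 (V [Es ! i])) xs + D 0 (const0 (W [Es ! i])) xs)" for i
    unfolding const0_add by (rule D_add[OF const0_in_alt_forms const0_in_alt_forms])
  then show ?thesis
    unfolding B_X_pairing_def D_add[OF V W] by (simp add: sum.distrib algebra_simps)
qed

lemma B_X_pairing_mult:
  assumes W: "W \<in> alt_forms sA 1" and len: "length Es = b"
  shows "B_X_pairing D b (\<lambda>xs. f * W xs) Es = f * B_X_pairing D b W Es"
proof -
  have "D 0 (const0 (f * W [Es ! i])) (remove_nth i Es) =
      D 0 (const0 f) (remove_nth i Es) * W [Es ! i] + f * D 0 (const0 (W [Es ! i])) (remove_nth i Es)"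
    if "i < b" for i
    using that len by (intro D0_const0_mult) simp
  then have "(\<Sum>i<b. (- 1) ^ (b - Suc i) * D 0 (const0 (f * W [Es ! i])) (remove_nth i Es)) =
      (\<Sum>i<b. (- 1) ^ (b - Suc i) * D 0 (const0 f) (remove_nth i Es) * W [Es ! i])
      + f * (\<Sum>i<b. (- 1) ^ (b - Suc i) * D 0 (const0 (W [Es ! i])) (remove_nth i Es))"
    by (simp add: sum.distrib sum_distrib_left algebra_simps)
  \<comment> \<open>the \<open>D 0 (const0 f)\<close> terms here cancel those coming from \<open>D1_mult\<close>\<close>
  then show ?thesis
    unfolding B_X_pairing_def D1_mult[OF W len] by (simp add: algebra_simps)
qed

lemma B_X_pairing_add_slot:
  assumes W: "W \<in> alt_forms sA 1" and len: "length Es = b" and k: "k < b"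
  shows "B_X_pairing D b W (Es[k := x + y]) = B_X_pairing D b W (Es[k := x]) + B_X_pairing D b W (Es[k := y])"
proof -
  define T where
    "T z i = (- 1) ^ (b - Suc i) * D 0 (const0 (W [Es[k := z] ! i])) (remove_nth i (Es[k := z]))" for z i
  have "T (x + y) i = T x i + T y i" if i: "i < b" for i
  proof (cases "i = k")
    case True
    then show ?thesis
      unfolding T_def using len k
      by (simp add: alt_form1_add[OF W] const0_add D_add[OF const0_in_alt_forms const0_in_alt_forms]
          algebra_simps)
  next
    case False
    let ?k' = "if k < i then k else k - 1"
    have "?k' < b - 1" "length (remove_nth i Es) = b - 1" using False i k len by auto
    then have "D 0 (const0 (W [Es ! i])) ((remove_nth i Es)[?k' := x + y]) =
        D 0 (const0 (W [Es ! i])) ((remove_nth i Es)[?k' := x])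
        + D 0 (const0 (W [Es ! i])) ((remove_nth i Es)[?k' := y])"
      using k by (intro additive_in_slotsD[OF alt_forms_additive_in_slots[OF D0_const0_in_alt_forms]]) auto
    then show ?thesis
      unfolding T_def using False len k i by (simp add: remove_nth_update_other algebra_simps)
  qed
  then have "(\<Sum>i<b. T (x + y) i) = (\<Sum>i<b. T x i) + (\<Sum>i<b. T y i)"
    by (simp add: sum.distrib[symmetric])
  moreover have "D 1 W (Es[k := x + y]) = D 1 W (Es[k := x]) + D 1 W (Es[k := y])"
    by (rule additive_in_slotsD[OF alt_forms_additive_in_slots[OF D1_in_alt_forms[OF W]] len k])
  ultimately show ?thesis
    unfolding B_X_pairing_def T_def using len by (simp add: algebra_simps)
qed

lemma B_X_pairing_scale_slot:
  assumes W: "W \<in> alt_forms sA 1" and len: "length Es = b" and k: "k < b"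
  shows "B_X_pairing D b W (Es[k := sA r x]) =
    r * B_X_pairing D b W (Es[k := x]) + (- 1) ^ Suc k * D 0 (const0 r) (remove_nth k Es) * W [x]"
proof -
  define T where
    "T z i = (- 1) ^ (b - Suc i) * D 0 (const0 (W [Es[k := z] ! i])) (remove_nth i (Es[k := z]))" for z i
  define anchor where "anchor = (- 1) ^ (b - Suc k) * D 0 (const0 r) (remove_nth k Es) * W [x]"
  have "T (sA r x) i = r * T x i + (if i = k then anchor else 0)" if i: "i < b" for i
  proof (cases "i = k")
    case True
    have "length (remove_nth k Es) = b - 1" using k len by simp
    then show ?thesis
      unfolding T_def anchor_def using True len k
      by (simp add: alt_form1_scale[OF W] D0_const0_mult algebra_simps)
  next
    case False
    let ?k' = "if k < i then k else k - 1"
    have "?k' < b - 1" "length (remove_nth i Es) = b - 1" using False i k len by auto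
    then have "D 0 (const0 (W [Es ! i])) ((remove_nth i Es)[?k' := sA r x]) =
        r * D 0 (const0 (W [Es ! i])) ((remove_nth i Es)[?k' := x])"
      using k by (intro alt_forms_scale_slot[OF D0_const0_in_alt_forms]) auto
    then show ?thesis
      unfolding T_def using False len k i by (simp add: remove_nth_update_other algebra_simps)
  qed
  then have "(\<Sum>i<b. T (sA r x) i) = r * (\<Sum>i<b. T x i) + anchor"
    using k by (simp add: sum.distrib sum_distrib_left)
  moreover have "D 1 W (Es[k := sA r x]) = r * D 1 W (Es[k := x])"
    by (rule alt_forms_scale_slot[OF D1_in_alt_forms[OF W] len k])
  moreover have "(- 1) ^ (b + 1) * anchor = (- 1) ^ k * D 0 (const0 r) (remove_nth k Es) * W [x]"
  proof -
    have "b + 1 + (b - Suc k) = 2 * (b - k) + k" using k by arith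
    then show ?thesis
      unfolding anchor_def mult.assoc[symmetric] power_add[symmetric] by (simp add: power_add power_mult)
  qed
  ultimately show ?thesis
    unfolding B_X_pairing_def T_def[symmetric] by (simp add: algebra_simps)
qed

lemma B_X_pairing_alternating:
  assumes W: "W \<in> alt_forms sA 1" and len: "length Es = b"
    and pq: "p < q" "q < b" and eq: "Es ! p = Es ! q"
  shows "B_X_pairing D b W Es = 0"
proof -
  define T where "T i = (- 1) ^ (b - Suc i) * D 0 (const0 (W [Es ! i])) (remove_nth i Es)" for i
  have \<omega>: "D 0 (const0 c) \<in> alt_forms sA (b - 1)" for c
    using pq by (intro D0_const0_in_alt_forms) simp
  have "D 1 W Es = 0"
    using alt_forms_alternating[OF D1_in_alt_forms[OF W]] len pq eq
    unfolding alternating_map_def by blast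
  moreover have "T i = 0" if "i \<in> {..<b} - {p, q}" for i
    unfolding T_def using that len pq eq
    by (simp add: alternating_map_remove_nth_eq_0[OF alt_forms_alternating[OF \<omega>]])
  then have "(\<Sum>i<b. T i) = T p + T q"
    using pq by (subst sum.mono_neutral_right[of "{..<b}" "{p, q}"]) auto
  moreover have "T q = - T p"
  proof -
    have "D 0 (const0 (W [Es ! p])) (remove_nth q Es) =
        (- 1) ^ (q - p - 1) * D 0 (const0 (W [Es ! p])) (remove_nth p Es)"
      by (rule alternating_map_remove_nth_swap[OF alt_forms_additive_in_slots[OF \<omega>]
            alt_forms_alternating[OF \<omega>] len pq eq])
    moreover have "(- 1) ^ (b - Suc q) * (- 1) ^ (q - p - 1) = - ((- 1) ^ (b - Suc p) :: 'r)"
    proof -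
      have "b - Suc p = Suc ((b - Suc q) + (q - p - 1))" using pq by arith
      then show ?thesis by (simp only: power_add power_Suc) simp
    qed
    ultimately show ?thesis
      unfolding T_def eq by (simp add: mult.assoc[symmetric])
  qed
  ultimately show ?thesis
    unfolding B_X_pairing_def T_def[symmetric] by simp
qed

end

locale projective_vector_field_deg = vector_field_deg +
  assumes fg_projective: "fg_projective sA"
begin

lemma B_X_pairing_represented:
  assumes len: "length Es = b"
  shows "\<exists>B. \<forall>W\<in>alt_forms sA 1. W [B] = B_X_pairing D b W Es"
proof (rule fg_projective_represent[OF fg_projective])
  fix V W assume "V \<in> alt_forms sA 1" "W \<in> alt_forms sA 1"
  then show "B_X_pairing D b (\<lambda>xs. V xs + W xs) Es = B_X_pairing D b V Es + B_X_pairing D b W Es"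
    by (rule B_X_pairing_add)
next
  fix f W assume "W \<in> alt_forms sA 1"
  then show "B_X_pairing D b (\<lambda>xs. f * W xs) Es = f * B_X_pairing D b W Es"
    using len by (rule B_X_pairing_mult)
qed

lemma B_X_pairing_eq:
  assumes len: "length Es = b" and W: "W \<in> alt_forms sA 1"
  shows "W [B_X sA D b Es] = B_X_pairing D b W Es"
proof -
  have "\<exists>!B. \<forall>W\<in>alt_forms sA 1. W [B] = B_X_pairing D b W Es"
  proof (rule ex_ex1I)
    show "\<exists>B. \<forall>W\<in>alt_forms sA 1. W [B] = B_X_pairing D b W Es"
      using len by (rule B_X_pairing_represented)
  next
    fix B B' assume "\<forall>W\<in>alt_forms sA 1. W [B] = B_X_pairing D b W Es"
      and "\<forall>W\<in>alt_forms sA 1. W [B'] = B_X_pairing D b W Es"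
    then show "B = B'"
      by (intro fg_projective_ext[OF fg_projective]) simp
  qed
  then have "\<forall>W\<in>alt_forms sA 1. W [B_X sA D b Es] = B_X_pairing D b W Es"
    unfolding B_X_eq_The by (rule theI')
  then show ?thesis using W by blast
qed

lemma B_X_eqI:
  "length Es = b \<Longrightarrow> (\<And>W. W \<in> alt_forms sA 1 \<Longrightarrow> W [B] = B_X_pairing D b W Es) \<Longrightarrow>
    B_X sA D b Es = B"
  by (rule fg_projective_ext[OF fg_projective]) (simp add: B_X_pairing_eq)

lemma B_X_add_slot:
  "length Es = b \<Longrightarrow> k < b \<Longrightarrow>
    B_X sA D b (Es[k := x + y]) = B_X sA D b (Es[k := x]) + B_X sA D b (Es[k := y])"
  by (intro B_X_eqI) (simp_all add: alt_form1_add B_X_pairing_eq B_X_pairing_add_slot)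

lemma B_X_additive: "additive_in_slots b (B_X sA D b)"
  unfolding additive_in_slots_def using B_X_add_slot by blast

lemma B_X_anchor:
  assumes "length Es = b" "k < b"
  shows "B_X sA D b (Es[k := sA r x]) =
    sA r (B_X sA D b (Es[k := x])) + sA ((- 1) ^ Suc k * D 0 (const0 r) (remove_nth k Es)) x"
  using assms
  by (intro B_X_eqI) (simp_all add: alt_form1_add alt_form1_scale B_X_pairing_eq B_X_pairing_scale_slot)

lemma B_X_alternating: "alternating_map b (B_X sA D b)"
proof -
  have "B_X sA D b Es = 0" if "length Es = b" "p < q" "q < b" "Es ! p = Es ! q" for Es p q
    using that by (intro B_X_eqI) (simp_all add: alt_form1_zero B_X_pairing_alternating)
  then show ?thesis
    unfolding alternating_map_def by blast
qed

end

theorem proposition14p4: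
  fixes sA :: "'r::{comm_ring_1,real_algebra_1} \<Rightarrow> 'a::ab_group_add \<Rightarrow> 'a"
    and P :: "'a \<Rightarrow> 'a"
    and D :: "nat \<Rightarrow> ('a list \<Rightarrow> 'r) \<Rightarrow> ('a list \<Rightarrow> 'r)"
    and b :: nat
  assumes "module sA"
    and "fg_projective sA"
    and "module_hom sA sA P"
    and "vector_field sA (int b - 1) D"
  shows "multilinear_map sA sA b (Phi sA P D b) \<and> alternating_map b (Phi sA P D b)"
proof -
  interpret projective_vector_field_deg sA D b
    using assms(2,4) by unfold_locales
  have "multilinear_map sA sA b (twist sA P b (B_X sA D b))"
    using assms(3) B_X_additive B_X_anchor by (rule twist_multilinear)
  moreover have "alternating_map b (twist sA P b (B_X sA D b))"
    using assms(3) B_X_additive B_X_alternating by (rule twist_alternating)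
  ultimately show ?thesis
    unfolding Phi_eq_twist ..
qed

end
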